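(* In the weighted kidney exchange game (W-KEG), even with two players, a player can have a strict incentive to hide vertices: there exists a 2-player W-KEG instance in which the independent agent has a unique optimal matching and one player's utility strictly increases when she removes one of her vertices (with its incident edges) from the game.
   Context: W-KEG: players $N=\{1,\dots,n\}$; player $p$ has internal graph $G^p=(V^p,E^p)$ (pairwise disjoint vertex sets); $E^I$ is a set of external edges each joining vertices of two different players; $E^I_p$ is the set of external edges incident to $V^p$. Each player $p$ has nonnegative weights $w^p_e$ on $E^p\cup E^I_p$. A strategy of player $p$ is a matching $M^p$ of $G^p$. The independent agent selects a maximum-weight matching $M^I$ of the external edges whose endpoints are uncovered by $\bigcup_pM^p$, where an external edge $(v,u)$ with $v\in V^i$, $u\in V^j$ has weight $w^I_{vu}=w^i_{vu}+w^j_{vu}$. With $M^I_p$ the edges of $M^I$ incident to $V^p$, player $p$'s utility is $\sum_{e\in M^p}w^p_e+\sum_{e\in M^I_p}w^p_e$. *)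

theory Defs
  imports Complex_Main
begin

text \<open>Vertices are natural numbers; the owner of vertex v is own v
(so the players' vertex sets V^p = {v \<in> V. own v = p} are pairwise disjoint).\<close>

type_synonym vtx = nat
type_synonym edge = "nat set"

definition is_matching :: "edge set \<Rightarrow> bool" where
  "is_matching M \<longleftrightarrow> (\<forall>e\<in>M. \<forall>f\<in>M. e \<noteq> f \<longrightarrow> e \<inter> f = {})"

definition int_edges :: "(vtx \<Rightarrow> nat) \<Rightarrow> edge set \<Rightarrow> nat \<Rightarrow> edge set" where
  "int_edges own E p = {e\<in>E. \<forall>v\<in>e. own v = p}"

definition ext_edges :: "(vtx \<Rightarrow> nat) \<Rightarrow> edge set \<Rightarrow> edge set" where
  "ext_edges own E = {e\<in>E. \<exists>u\<in>e. \<exists>v\<in>e. own u \<noteq> own v}"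

definition incident_edges :: "(vtx \<Rightarrow> nat) \<Rightarrow> edge set \<Rightarrow> nat \<Rightarrow> edge set" where
  "incident_edges own E p = {e\<in>E. \<exists>v\<in>e. own v = p}"

definition wkeg :: "nat set \<Rightarrow> vtx set \<Rightarrow> (vtx \<Rightarrow> nat) \<Rightarrow> edge set
                    \<Rightarrow> (nat \<Rightarrow> edge \<Rightarrow> real) \<Rightarrow> bool" where
  "wkeg N V own E w \<longleftrightarrow> finite V \<and> own ` V \<subseteq> N
     \<and> (\<forall>e\<in>E. \<exists>u v. e = {u, v} \<and> u \<noteq> v \<and> u \<in> V \<and> v \<in> V)
     \<and> (\<forall>p\<in>N. \<forall>e \<in> int_edges own E p \<union> incident_edges own (ext_edges own E) p. 0 \<le> w p e)"

definition wI :: "(vtx \<Rightarrow> nat) \<Rightarrow> (nat \<Rightarrow> edge \<Rightarrow> real) \<Rightarrow> edge \<Rightarrow> real" where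
  "wI own w e = (\<Sum>p \<in> own ` e. w p e)"

definition valid_profile :: "nat set \<Rightarrow> (vtx \<Rightarrow> nat) \<Rightarrow> edge set \<Rightarrow> (nat \<Rightarrow> edge set) \<Rightarrow> bool" where
  "valid_profile N own E S \<longleftrightarrow> (\<forall>p\<in>N. S p \<subseteq> int_edges own E p \<and> is_matching (S p))"

definition IA_feasible :: "nat set \<Rightarrow> (vtx \<Rightarrow> nat) \<Rightarrow> edge set \<Rightarrow> (nat \<Rightarrow> edge set)
                           \<Rightarrow> edge set \<Rightarrow> bool" where
  "IA_feasible N own E S M \<longleftrightarrow> M \<subseteq> ext_edges own E \<and> is_matching M
     \<and> (\<forall>e\<in>M. e \<inter> \<Union>(\<Union>p\<in>N. S p) = {})"

definition IA_opt :: "nat set \<Rightarrow> (vtx \<Rightarrow> nat) \<Rightarrow> edge set \<Rightarrow> (nat \<Rightarrow> edge \<Rightarrow> real)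
                      \<Rightarrow> (nat \<Rightarrow> edge set) \<Rightarrow> edge set \<Rightarrow> bool" where
  "IA_opt N own E w S M \<longleftrightarrow> IA_feasible N own E S M
     \<and> (\<forall>M'. IA_feasible N own E S M' \<longrightarrow> (\<Sum>e\<in>M'. wI own w e) \<le> (\<Sum>e\<in>M. wI own w e))"

definition utility :: "(vtx \<Rightarrow> nat) \<Rightarrow> (nat \<Rightarrow> edge \<Rightarrow> real) \<Rightarrow> (nat \<Rightarrow> edge set)
                       \<Rightarrow> edge set \<Rightarrow> nat \<Rightarrow> real" where
  "utility own w S MI p = (\<Sum>e\<in>S p. w p e) + (\<Sum>e \<in> incident_edges own MI p. w p e)"

definition remove_vertex :: "vtx \<Rightarrow> edge set \<Rightarrow> edge set" where
  "remove_vertex x E = {e\<in>E. x \<notin> e}"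

end

theory Submission
  imports Defs
begin

text \<open>Player 1 owns vertices 0 and 1, player 2 owns vertex 2; the external edges are
{0,2}, worth 1 to player 1, and {1,2}, worth 5 to player 2. The independent agent
therefore matches {1,2} and player 1 gets nothing. Once player 1 hides vertex 1,
only {0,2} is left, the agent matches it and player 1 gains 1.\<close>

lemma IA_feasible_empty_profile:
  "IA_feasible N own E (\<lambda>_. {}) M \<longleftrightarrow> M \<subseteq> ext_edges own E \<and> is_matching M"
  by (simp add: IA_feasible_def)

lemma valid_profile_empty: "valid_profile N own E (\<lambda>_. {})"
  by (simp add: valid_profile_def is_matching_def)

lemma is_matching_subset_pair:
  assumes "a \<noteq> b" and "a \<inter> b \<noteq> {}"
  shows "M \<subseteq> {a, b} \<and> is_matching M \<longleftrightarrow> M = {} \<or> M = {a} \<or> M = {b}"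
  using assms unfolding is_matching_def by blast

lemma IA_opt_iff_strict_max:
  assumes "IA_feasible N own E S M"
    and "\<And>M'. IA_feasible N own E S M' \<Longrightarrow> M' \<noteq> M
           \<Longrightarrow> (\<Sum>e\<in>M'. wI own w e) < (\<Sum>e\<in>M. wI own w e)"
  shows "IA_opt N own E w S M' \<longleftrightarrow> M' = M"
  using assms unfolding IA_opt_def by (metis less_le_not_le order_refl)

lemma wI_edge:
  assumes "own u \<noteq> own v"
  shows "wI own w {u, v} = w (own u) {u, v} + w (own v) {u, v}"
  using assms by (simp add: wI_def)

definition hide_own :: "vtx \<Rightarrow> nat" where
  "hide_own v = (if v = 2 then 2 else 1)"

definition hide_edges :: "edge set" where
  "hide_edges = {{0, 2}, {1, 2}}"

definition hide_weight :: "nat \<Rightarrow> edge \<Rightarrow> real" where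
  "hide_weight p e =
     (if p = 1 \<and> e = {0, 2} then 1 else if p = 2 \<and> e = {1, 2} then 5 else 0)"

lemma edges_distinct: "({0, 2} :: edge) \<noteq> {1, 2}"
  by (metis empty_iff insert_iff zero_neq_one zero_neq_numeral)

lemma remove_vertex_hide_edges: "remove_vertex 1 hide_edges = {{0, 2}}"
  by (auto simp: remove_vertex_def hide_edges_def)

lemma ext_edges_hide_edges: "ext_edges hide_own hide_edges = hide_edges"
  by (auto simp: ext_edges_def hide_edges_def hide_own_def)

lemma ext_edges_hidden: "ext_edges hide_own {{0, 2}} = {{0, 2}}"
  by (auto simp: ext_edges_def hide_own_def)

lemma wI_hide_02: "wI hide_own hide_weight {0, 2} = 1"
  using edges_distinct by (simp add: wI_edge hide_own_def hide_weight_def)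

lemma wI_hide_12: "wI hide_own hide_weight {1, 2} = 5"
  using edges_distinct[symmetric] by (simp add: wI_edge hide_own_def hide_weight_def)

lemma IA_opt_hide_edges:
  "IA_opt {1, 2} hide_own hide_edges hide_weight (\<lambda>_. {}) M \<longleftrightarrow> M = {{1, 2}}"
proof (rule IA_opt_iff_strict_max)
  have feasible_iff: "IA_feasible {1, 2} hide_own hide_edges (\<lambda>_. {}) M'
      \<longleftrightarrow> M' = {} \<or> M' = {{0, 2}} \<or> M' = {{1, 2}}" for M'
    unfolding IA_feasible_empty_profile ext_edges_hide_edges unfolding hide_edges_def
    by (rule is_matching_subset_pair[OF edges_distinct]) auto
  then show "IA_feasible {1, 2} hide_own hide_edges (\<lambda>_. {}) {{1, 2}}" by simp
  show "(\<Sum>e\<in>M'. wI hide_own hide_weight e) < (\<Sum>e\<in>{{1, 2}}. wI hide_own hide_weight e)"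
    if "IA_feasible {1, 2} hide_own hide_edges (\<lambda>_. {}) M'" and "M' \<noteq> {{1, 2}}" for M'
    using that wI_hide_02 wI_hide_12 unfolding feasible_iff by auto
qed

lemma IA_opt_hidden:
  "IA_opt {1, 2} hide_own {{0, 2}} hide_weight (\<lambda>_. {}) M \<longleftrightarrow> M = {{0, 2}}"
proof (rule IA_opt_iff_strict_max)
  have feasible_iff: "IA_feasible {1, 2} hide_own {{0, 2}} (\<lambda>_. {}) M'
      \<longleftrightarrow> M' = {} \<or> M' = {{0, 2}}" for M'
    unfolding IA_feasible_empty_profile ext_edges_hidden is_matching_def by blast
  then show "IA_feasible {1, 2} hide_own {{0, 2}} (\<lambda>_. {}) {{0, 2}}" by simp
  show "(\<Sum>e\<in>M'. wI hide_own hide_weight e) < (\<Sum>e\<in>{{0, 2}}. wI hide_own hide_weight e)"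
    if "IA_feasible {1, 2} hide_own {{0, 2}} (\<lambda>_. {}) M'" and "M' \<noteq> {{0, 2}}" for M'
    using that unfolding feasible_iff by (auto simp: wI_hide_02)
qed

lemma utility_empty_profile:
  "utility own w (\<lambda>_. {}) MI p = (\<Sum>e \<in> incident_edges own MI p. w p e)"
  by (simp add: utility_def)

lemma incident_edges_singleton:
  "own u = p \<Longrightarrow> incident_edges own {{u, v}} p = {{u, v}}"
  by (auto simp: incident_edges_def)

lemma hide_own_player1: "hide_own 0 = 1" "hide_own 1 = 1"
  by (simp_all add: hide_own_def)

lemma utility_hide_edges: "utility hide_own hide_weight (\<lambda>_. {}) {{1, 2}} 1 = 0"
  unfolding utility_empty_profile
    incident_edges_singleton[where own = hide_own, OF hide_own_player1(2)]
  using edges_distinct[symmetric] by (simp add: hide_weight_def)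

lemma utility_hidden: "utility hide_own hide_weight (\<lambda>_. {}) {{0, 2}} 1 = 1"
  unfolding utility_empty_profile
    incident_edges_singleton[where own = hide_own, OF hide_own_player1(1)]
  by (simp add: hide_weight_def)

lemma wkeg_hide: "wkeg {1, 2} {0, 1, 2} hide_own hide_edges hide_weight"
proof -
  have "\<exists>u v. e = {u, v} \<and> u \<noteq> v \<and> u \<in> {0, 1, 2} \<and> v \<in> {0, 1, 2}"
    if "e \<in> hide_edges" for e :: edge
    using that unfolding hide_edges_def
    by (elim insertE emptyE) (rule exI[of _ 0] exI[of _ 1], rule exI[of _ 2], simp)+
  then show ?thesis
    unfolding wkeg_def by (auto simp: hide_own_def hide_weight_def)
qed

theorem lemma2:
  shows "\<exists>(V :: vtx set) own E w S p x.
     wkeg {1, 2} V own E w \<and> p \<in> {1, 2} \<and> x \<in> V \<and> own x = p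
   \<and> valid_profile {1, 2} own E S
   \<and> valid_profile {1, 2} own (remove_vertex x E) S
   \<and> (\<exists>!M. IA_opt {1, 2} own E w S M)
   \<and> (\<forall>M M'. IA_opt {1, 2} own E w S M
        \<longrightarrow> IA_opt {1, 2} own (remove_vertex x E) w S M'
        \<longrightarrow> utility own w S M p < utility own w S M' p)"
proof (intro exI conjI)
  \<comment> \<open>The rewriting is done by \<open>unfolding\<close>: \<open>simp\<close> turns the vertex \<open>1\<close> into \<open>Suc 0\<close>
     inside the goal, after which the lemmas stated with \<open>1\<close> no longer match.\<close>
  show "wkeg {1, 2} {0, 1, 2} hide_own hide_edges hide_weight" by (rule wkeg_hide)
  show "\<exists>!M. IA_opt {1, 2} hide_own hide_edges hide_weight (\<lambda>_. {}) M"
    unfolding IA_opt_hide_edges by simp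
  show "\<forall>M M'. IA_opt {1, 2} hide_own hide_edges hide_weight (\<lambda>_. {}) M
      \<longrightarrow> IA_opt {1, 2} hide_own (remove_vertex 1 hide_edges) hide_weight (\<lambda>_. {}) M'
      \<longrightarrow> utility hide_own hide_weight (\<lambda>_. {}) M 1 < utility hide_own hide_weight (\<lambda>_. {}) M' 1"
    unfolding remove_vertex_hide_edges IA_opt_hide_edges IA_opt_hidden
    using utility_hide_edges utility_hidden by simp
qed (simp_all add: valid_profile_empty hide_own_def)

end
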